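(* Let $(M,g)$ be an orientable Riemannian manifold and let $\lambda\in\mathbb{R}$. Let $a,b\in C^\infty(M)$ with $a>0$ satisfy the Helmholtz equations $\Delta a+\lambda a=0$ and $\Delta b+\lambda b=0$ (in particular, for $\lambda=0$, the Laplace equation). Then $m=a^2$ is a last multiplier of the gradient vector field $\nabla u$ of the function $u=\frac{b}{a}$.
   Context: $\nabla u$ denotes the gradient with respect to $g$, $V_g$ the Riemannian volume form, and $\Delta u=\operatorname{div}_{V_g}\nabla u$ the Laplacian, where for a vector field $A$, $\operatorname{div}_{V_g}A$ is defined by $L_AV_g=(\operatorname{div}_{V_g}A)V_g$. A function $m$ is a last multiplier of $A$ if $d(m\,i_AV_g)=0$, equivalently $A(m)+m\operatorname{div}_{V_g}A=0$. *)

theory Defs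
  imports "HOL-Analysis.Analysis"
begin

text \<open>Local-coordinate model of an (oriented) Riemannian manifold: an open chart domain
  U in real^'n carrying a smooth metric g (matrix of coefficients g_ij).\<close>

definition partial :: "'n::finite \<Rightarrow> (real^'n \<Rightarrow> real) \<Rightarrow> real^'n \<Rightarrow> real" where
  "partial i f x = frechet_derivative f (at x) (axis i 1)"

definition smooth_on :: "(real^'n::finite) set \<Rightarrow> (real^'n \<Rightarrow> real) \<Rightarrow> bool" where
  "smooth_on U f \<longleftrightarrow> (\<forall>is :: 'n list. (foldr partial is f) differentiable_on U)"

definition riemannian_metric_on ::
    "(real^'n::finite) set \<Rightarrow> (real^'n \<Rightarrow> real^'n^'n) \<Rightarrow> bool" where
  "riemannian_metric_on U g \<longleftrightarrow>
     (\<forall>i j. smooth_on U (\<lambda>x. g x $ i $ j)) \<and>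
     (\<forall>x\<in>U. transpose (g x) = g x) \<and>
     (\<forall>x\<in>U. \<forall>v. v \<noteq> 0 \<longrightarrow> v \<bullet> (g x *v v) > 0)"

text \<open>Density of the Riemannian volume form V_g = sqrt(det g) dx^1 ... dx^n.\<close>
definition vol_density :: "(real^'n::finite \<Rightarrow> real^'n^'n) \<Rightarrow> real^'n \<Rightarrow> real" where
  "vol_density g x = sqrt (det (g x))"

definition grad :: "(real^'n::finite \<Rightarrow> real^'n^'n) \<Rightarrow> (real^'n \<Rightarrow> real) \<Rightarrow> real^'n \<Rightarrow> real^'n" where
  "grad g u x = (\<chi> i. \<Sum>j\<in>UNIV. matrix_inv (g x) $ i $ j * partial j u x)"

text \<open>Divergence w.r.t. V_g, i.e. L_A V_g = (div A) V_g, in coordinates: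
  div A = (1/sqrt(det g)) d_i (sqrt(det g) A^i).\<close>
definition div_vol :: "(real^'n::finite \<Rightarrow> real^'n^'n) \<Rightarrow> (real^'n \<Rightarrow> real^'n) \<Rightarrow> real^'n \<Rightarrow> real" where
  "div_vol g A x = (1 / vol_density g x) *
     (\<Sum>i\<in>UNIV. partial i (\<lambda>y. vol_density g y * A y $ i) x)"

definition laplacian :: "(real^'n::finite \<Rightarrow> real^'n^'n) \<Rightarrow> (real^'n \<Rightarrow> real) \<Rightarrow> real^'n \<Rightarrow> real" where
  "laplacian g u = div_vol g (grad g u)"

definition vf_apply :: "(real^'n::finite \<Rightarrow> real^'n) \<Rightarrow> (real^'n \<Rightarrow> real) \<Rightarrow> real^'n \<Rightarrow> real" where
  "vf_apply A m x = (\<Sum>i\<in>UNIV. A x $ i * partial i m x)"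

definition last_multiplier ::
    "(real^'n::finite) set \<Rightarrow> (real^'n \<Rightarrow> real^'n^'n) \<Rightarrow> (real^'n \<Rightarrow> real) \<Rightarrow> (real^'n \<Rightarrow> real^'n) \<Rightarrow> bool" where
  "last_multiplier U g m A \<longleftrightarrow> (\<forall>x\<in>U. vf_apply A m x + m x * div_vol g A x = 0)"

end

theory Submission
  imports Defs
begin

(* Put u = b / a and m = a^2. The Leibniz rule turns the last multiplier condition
   A(m) + m div A = 0 into div (m A) = 0, and the quotient rule gives
   a^2 grad u = a grad b - b grad a. Since g is symmetric, the cross terms <grad a, grad b>
   cancel in the divergence of this Wronskian field, which is therefore
   a Lap b - b Lap a = a (-lam b) - b (-lam a) = 0. *)

lemma partial_cong_open:
  assumes "open S" "x \<in> S" "\<And>y. y \<in> S \<Longrightarrow> f y = h y"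
  shows "partial i f x = partial i h x"
  \<comment> \<open>No differentiability is needed: both sides choose by SOME from the same predicate.\<close>
proof -
  have "(f has_derivative D) (at x) \<longleftrightarrow> (h has_derivative D) (at x)" for D
    using has_derivative_transform_within_open[OF _ assms(1,2), where f = f and g = h]
      has_derivative_transform_within_open[OF _ assms(1,2), where f = h and g = f] assms(3)
    by auto
  then show ?thesis
    unfolding partial_def frechet_derivative_def by simp
qed

lemma partial_eq_derivative: "(f has_derivative f') (at x) \<Longrightarrow> partial i f x = f' (axis i 1)"
  unfolding partial_def by (simp add: frechet_derivative_at[symmetric])

lemma partial_mult:
  fixes f h :: "real^'n::finite \<Rightarrow> real"
  assumes "f differentiable (at x)" "h differentiable (at x)"
  shows "partial i (\<lambda>y. f y * h y) x = f x * partial i h x + partial i f x * h x"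
  using partial_eq_derivative[OF has_derivative_mult[OF assms[THEN frechet_derivative_works[THEN iffD1]]]]
  by (simp add: partial_def)

lemma partial_diff:
  fixes f h :: "real^'n::finite \<Rightarrow> real"
  assumes "f differentiable (at x)" "h differentiable (at x)"
  shows "partial i (\<lambda>y. f y - h y) x = partial i f x - partial i h x"
  using partial_eq_derivative[OF has_derivative_diff[OF assms[THEN frechet_derivative_works[THEN iffD1]]]]
  by (simp add: partial_def)

lemma partial_divide:
  fixes f h :: "real^'n::finite \<Rightarrow> real"
  assumes "f differentiable (at x)" "h differentiable (at x)" "h x \<noteq> 0"
  shows "partial i (\<lambda>y. f y / h y) x = (partial i f x * h x - f x * partial i h x) / (h x)\<^sup>2"
  using partial_eq_derivative[OF has_derivative_divide[OF
        assms(1,2)[THEN frechet_derivative_works[THEN iffD1]] assms(3)]] assms(3)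
  by (simp add: partial_def field_simps power2_eq_square)

lemma smooth_on_differentiable:
  assumes "smooth_on U f" "open U" "x \<in> U"
  shows "f differentiable (at x)" "partial j f differentiable (at x)"
proof -
  have "(foldr partial [] f) differentiable_on U" "(foldr partial [j] f) differentiable_on U"
    using assms(1) unfolding smooth_on_def by blast+
  then show "f differentiable (at x)" "partial j f differentiable (at x)"
    using assms(2,3) differentiable_on_eq_differentiable_at by auto
qed

lemma matrix_inv_right:
  assumes "invertible A"
  shows "A ** matrix_inv A = mat 1"
  using someI_ex[OF assms[unfolded invertible_def]] unfolding matrix_inv_def by blast

lemma transpose_matrix_inv_symmetric:
  fixes A :: "'a::comm_semiring_1^'n^'n"
  assumes "invertible A" "transpose A = A"
  shows "transpose (matrix_inv A) = matrix_inv A"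
proof -
  have "transpose (matrix_inv A) ** A = mat 1"
    using matrix_inv_right[OF assms(1)] assms(2) by (metis matrix_transpose_mul transpose_mat)
  then show ?thesis
    by (metis matrix_inv_right[OF assms(1)] matrix_mul_assoc matrix_mul_lid matrix_mul_rid)
qed

lemma matrix_inv_cramer:
  fixes A :: "'a::field^'n^'n"
  assumes "invertible A"
  shows "matrix_inv A $ i $ j = det (\<chi> r c. if c = i then axis j 1 $ r else A $ r $ c) / det A"
proof -
  have "A *v (matrix_inv A *v axis j 1) = axis j 1"
    by (simp add: matrix_vector_mul_assoc matrix_inv_right[OF assms])
  then have "matrix_inv A *v axis j 1
      = (\<chi> k. det (\<chi> r c. if c = k then axis j 1 $ r else A $ r $ c) / det A)"
    using cramer assms invertible_det_nz by blast
  moreover have "(matrix_inv A *v axis j 1) $ i = matrix_inv A $ i $ j"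
    by (simp add: matrix_vector_mult_def axis_def if_distrib cong: if_cong)
  ultimately show ?thesis by simp
qed

lemma positive_definite_invertible:
  fixes A :: "real^'n::finite^'n"
  assumes "\<forall>v. v \<noteq> 0 \<longrightarrow> v \<bullet> (A *v v) > 0"
  shows "invertible A"
proof -
  have "\<forall>v. A *v v = 0 \<longrightarrow> v = 0"
    using assms by force
  then show ?thesis
    using matrix_left_invertible_ker invertible_left_inverse by blast
qed

lemma differentiable_transform_within_open:
  assumes "f differentiable (at x)" "open S" "x \<in> S" "\<And>y. y \<in> S \<Longrightarrow> f y = h y"
  shows "h differentiable (at x)"
  using assms has_derivative_transform_within_open unfolding differentiable_def by blast

lemma differentiable_prod:
  fixes f :: "'i \<Rightarrow> 'a::real_normed_vector \<Rightarrow> 'b::real_normed_field"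
  assumes "\<And>i. i \<in> I \<Longrightarrow> f i differentiable (at x)"
  shows "(\<lambda>y. \<Prod>i\<in>I. f i y) differentiable (at x)"
proof -
  have "\<forall>i\<in>I. \<exists>D. (f i has_derivative D) (at x)"
    using assms unfolding differentiable_def by blast
  from bchoice[OF this] obtain D where "\<And>i. i \<in> I \<Longrightarrow> (f i has_derivative D i) (at x)"
    by blast
  then show ?thesis
    unfolding differentiable_def by (blast intro: has_derivative_prod)
qed

lemma det_differentiable:
  fixes M :: "'a::real_normed_vector \<Rightarrow> real^'m::finite^'m"
  assumes "\<And>i j. (\<lambda>y. M y $ i $ j) differentiable (at x)"
  shows "(\<lambda>y. det (M y)) differentiable (at x)"
  unfolding det_def
  by (intro differentiable_sum ballI differentiable_mult differentiable_const differentiable_prod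
      finite_permutations assms) simp

lemma matrix_inv_differentiable:
  fixes M :: "'a::real_normed_vector \<Rightarrow> real^'m::finite^'m"
  assumes "open S" "x \<in> S" "\<And>y. y \<in> S \<Longrightarrow> invertible (M y)"
    and "\<And>i j. (\<lambda>y. M y $ i $ j) differentiable (at x)"
  shows "(\<lambda>y. matrix_inv (M y) $ i $ j) differentiable (at x)"
proof -
  have "(\<lambda>y. det (\<chi> r c. if c = i then axis j 1 $ r else M y $ r $ c)) differentiable (at x)"
  proof (rule det_differentiable)
    fix r c
    show "(\<lambda>y. (\<chi> r c. if c = i then axis j 1 $ r else M y $ r $ c) $ r $ c) differentiable (at x)"
      by (cases "c = i") (simp_all add: assms(4))
  qed
  then have "(\<lambda>y. det (\<chi> r c. if c = i then axis j 1 $ r else M y $ r $ c) / det (M y))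
      differentiable (at x)"
    using det_differentiable[OF assms(4)] assms(2,3) invertible_det_nz
    by (intro differentiable_divide) auto
  then show ?thesis
    by (rule differentiable_transform_within_open[OF _ assms(1,2)])
      (simp add: matrix_inv_cramer assms(3))
qed

lemma sqrt_differentiable_at:
  fixes t :: real
  assumes "t \<noteq> 0"
  shows "sqrt differentiable (at t)"
proof -
  have "DERIV sqrt t :> (if t > 0 then inverse (sqrt t) / 2 else - inverse (sqrt t) / 2)"
    by (rule DERIV_real_sqrt_generic) (use assms in auto)
  then show ?thesis
    unfolding differentiable_def using has_field_derivative_imp_has_derivative by blast
qed

lemma riemannian_metric_on_invertible:
  "riemannian_metric_on U g \<Longrightarrow> x \<in> U \<Longrightarrow> invertible (g x)"
  unfolding riemannian_metric_on_def by (simp add: positive_definite_invertible)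

lemma riemannian_metric_on_symmetric_matrix_inv:
  "riemannian_metric_on U g \<Longrightarrow> x \<in> U \<Longrightarrow> transpose (matrix_inv (g x)) = matrix_inv (g x)"
  using riemannian_metric_on_invertible transpose_matrix_inv_symmetric
  unfolding riemannian_metric_on_def by blast

lemma vol_density_nonzero:
  "riemannian_metric_on U g \<Longrightarrow> x \<in> U \<Longrightarrow> vol_density g x \<noteq> 0"
  unfolding vol_density_def using riemannian_metric_on_invertible invertible_det_nz by auto

lemma vol_density_grad_differentiable:
  assumes "open U" "riemannian_metric_on U g" "smooth_on U f" "x \<in> U"
  shows "(\<lambda>y. vol_density g y * grad g f y $ i) differentiable (at x)"
proof -
  have entries: "(\<lambda>y. g y $ i $ j) differentiable (at x)" for i j
    using assms smooth_on_differentiable(1) unfolding riemannian_metric_on_def by blast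
  have "det (g x) \<noteq> 0"
    using assms(2,4) riemannian_metric_on_invertible invertible_det_nz by blast
  then have "vol_density g differentiable (at x)"
    unfolding vol_density_def[abs_def]
    using differentiable_compose[of sqrt, OF sqrt_differentiable_at det_differentiable[OF entries]]
    by blast
  moreover have "(\<lambda>y. matrix_inv (g y) $ i $ j) differentiable (at x)" for i j
    using matrix_inv_differentiable[OF assms(1,4) riemannian_metric_on_invertible[OF assms(2)]
        entries] by blast
  ultimately show ?thesis
    unfolding grad_def
    by (auto intro!: differentiable_mult differentiable_sum
        smooth_on_differentiable(2)[OF assms(3,1,4)])
qed

lemma div_vol_cong_open:
  assumes "open S" "x \<in> S" "\<And>y. y \<in> S \<Longrightarrow> A y = B y"
  shows "div_vol g A x = div_vol g B x"
  unfolding div_vol_def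
  by (auto intro!: sum.cong partial_cong_open[OF assms(1,2)] simp: assms(3))

lemma div_vol_diff:
  assumes "\<And>i. (\<lambda>y. vol_density g y * A y $ i) differentiable (at x)"
    and "\<And>i. (\<lambda>y. vol_density g y * B y $ i) differentiable (at x)"
  shows "div_vol g (\<lambda>y. A y - B y) x = div_vol g A x - div_vol g B x"
proof -
  have "partial i (\<lambda>y. vol_density g y * (A y - B y) $ i) x
      = partial i (\<lambda>y. vol_density g y * A y $ i) x - partial i (\<lambda>y. vol_density g y * B y $ i) x"
    for i
    using partial_diff[OF assms(1,2)] by (simp add: right_diff_distrib)
  then show ?thesis
    unfolding div_vol_def by (simp add: sum_subtractf right_diff_distrib)
qed

lemma div_vol_scaleR:
  fixes f :: "real^'n::finite \<Rightarrow> real"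
  assumes "f differentiable (at x)"
    and "\<And>i. (\<lambda>y. vol_density g y * A y $ i) differentiable (at x)"
    and "vol_density g x \<noteq> 0"
  shows "div_vol g (\<lambda>y. f y *\<^sub>R A y) x = vf_apply A f x + f x * div_vol g A x"
proof -
  have "partial i (\<lambda>y. vol_density g y * (f y *\<^sub>R A y) $ i) x
      = f x * partial i (\<lambda>y. vol_density g y * A y $ i) x
        + partial i f x * (vol_density g x * A x $ i)"
    for i
    using partial_mult[OF assms(1,2)] by (simp add: ac_simps)
  then show ?thesis
    using assms(3) unfolding div_vol_def vf_apply_def
    by (simp add: sum.distrib sum_distrib_left field_simps)
qed

lemma grad_divide:
  assumes "a differentiable (at x)" "b differentiable (at x)" "a x \<noteq> 0"
  shows "(a x)\<^sup>2 *\<^sub>R grad g (\<lambda>y. b y / a y) x = a x *\<^sub>R grad g b x - b x *\<^sub>R grad g a x"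
proof -
  let ?G = "matrix_inv (g x)"
  have quotient: "(a x)\<^sup>2 * partial j (\<lambda>y. b y / a y) x = a x * partial j b x - b x * partial j a x"
    for j
    using partial_divide[OF assms(2,1,3)] assms(3) by (simp add: field_simps)
  have "(a x)\<^sup>2 * (?G $ i $ j * partial j (\<lambda>y. b y / a y) x)
      = a x * (?G $ i $ j * partial j b x) - b x * (?G $ i $ j * partial j a x)" for i j
  proof -
    have "(a x)\<^sup>2 * (?G $ i $ j * partial j (\<lambda>y. b y / a y) x)
        = ?G $ i $ j * ((a x)\<^sup>2 * partial j (\<lambda>y. b y / a y) x)"
      by (simp add: ac_simps)
    also have "\<dots> = a x * (?G $ i $ j * partial j b x) - b x * (?G $ i $ j * partial j a x)"
      unfolding quotient by (simp add: algebra_simps)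
    finally show ?thesis .
  qed
  then show ?thesis
    unfolding grad_def by (simp add: vec_eq_iff sum_distrib_left sum_subtractf[symmetric])
qed

lemma vf_apply_grad_swap:
  assumes "transpose (matrix_inv (g x)) = matrix_inv (g x)"
  shows "vf_apply (grad g b) a x = vf_apply (grad g a) b x"
proof -
  let ?G = "matrix_inv (g x)"
  have sym: "?G $ i $ j = ?G $ j $ i" for i j
    using arg_cong[OF assms, of "\<lambda>M. M $ j $ i"] by (simp add: transpose_def)
  have "vf_apply (grad g b) a x = (\<Sum>i\<in>UNIV. \<Sum>j\<in>UNIV. ?G $ i $ j * partial j b x * partial i a x)"
    unfolding vf_apply_def grad_def by (simp add: sum_distrib_right)
  also have "\<dots> = (\<Sum>j\<in>UNIV. \<Sum>i\<in>UNIV. ?G $ i $ j * partial j b x * partial i a x)"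
    by (rule sum.swap)
  also have "\<dots> = (\<Sum>j\<in>UNIV. \<Sum>i\<in>UNIV. ?G $ j $ i * partial i a x * partial j b x)"
    by (intro sum.cong refl) (simp only: sym mult.commute mult.left_commute)
  also have "\<dots> = vf_apply (grad g a) b x"
    unfolding vf_apply_def grad_def by (simp add: sum_distrib_right)
  finally show ?thesis .
qed

definition wronskian_grad ::
    "(real^'n::finite \<Rightarrow> real^'n^'n) \<Rightarrow> (real^'n \<Rightarrow> real) \<Rightarrow> (real^'n \<Rightarrow> real)
      \<Rightarrow> real^'n \<Rightarrow> real^'n"
  where "wronskian_grad g a b y = a y *\<^sub>R grad g b y - b y *\<^sub>R grad g a y"

lemma div_vol_wronskian_grad:
  fixes a b :: "real^'n::finite \<Rightarrow> real"
  assumes "a differentiable (at x)" "b differentiable (at x)"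
    and "\<And>i. (\<lambda>y. vol_density g y * grad g a y $ i) differentiable (at x)"
    and "\<And>i. (\<lambda>y. vol_density g y * grad g b y $ i) differentiable (at x)"
    and "vol_density g x \<noteq> 0" "transpose (matrix_inv (g x)) = matrix_inv (g x)"
  shows "div_vol g (wronskian_grad g a b) x = a x * laplacian g b x - b x * laplacian g a x"
proof -
  have scaled: "(\<lambda>y. vol_density g y * (f y *\<^sub>R grad g h y) $ i) differentiable (at x)"
    if "f differentiable (at x)" "\<And>i. (\<lambda>y. vol_density g y * grad g h y $ i) differentiable (at x)"
    for f h :: "real^'n \<Rightarrow> real" and i
    using differentiable_mult[OF that(1) that(2)[of i]] by (simp add: ac_simps)
  have "div_vol g (wronskian_grad g a b) x
      = div_vol g (\<lambda>y. a y *\<^sub>R grad g b y) x - div_vol g (\<lambda>y. b y *\<^sub>R grad g a y) x"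
    unfolding wronskian_grad_def[abs_def] by (rule div_vol_diff) (intro scaled assms)+
  also have "\<dots> = (vf_apply (grad g b) a x + a x * laplacian g b x)
      - (vf_apply (grad g a) b x + b x * laplacian g a x)"
    unfolding laplacian_def
    using div_vol_scaleR[OF assms(1,4,5)] div_vol_scaleR[OF assms(2,3,5)] by simp
  also have "\<dots> = a x * laplacian g b x - b x * laplacian g a x"
    using vf_apply_grad_swap[where g = g and x = x, OF assms(6)] by simp
  finally show ?thesis .
qed

lemma vf_apply_add_div_vol_grad_quotient:
  fixes a b :: "real^'n::finite \<Rightarrow> real"
  assumes "open U" "x \<in> U"
    and "\<And>y. y \<in> U \<Longrightarrow> a differentiable (at y)" "\<And>y. y \<in> U \<Longrightarrow> b differentiable (at y)"
    and "\<And>y. y \<in> U \<Longrightarrow> a y \<noteq> 0"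
    and "\<And>i. (\<lambda>y. vol_density g y * grad g a y $ i) differentiable (at x)"
    and "\<And>i. (\<lambda>y. vol_density g y * grad g b y $ i) differentiable (at x)"
    and "vol_density g x \<noteq> 0"
  shows "vf_apply (grad g (\<lambda>y. b y / a y)) (\<lambda>y. (a y)\<^sup>2) x
      + (a x)\<^sup>2 * div_vol g (grad g (\<lambda>y. b y / a y)) x = div_vol g (wronskian_grad g a b) x"
proof -
  let ?u = "\<lambda>y. b y / a y"
  have wronskian: "(a y)\<^sup>2 *\<^sub>R grad g ?u y = wronskian_grad g a b y" if "y \<in> U" for y
    unfolding wronskian_grad_def using grad_divide assms(3-5) that by blast
  have "(\<lambda>y. vol_density g y * grad g ?u y $ i) differentiable (at x)" for i
  proof (rule differentiable_transform_within_open[OF _ assms(1,2)])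
    show "(\<lambda>y. (a y * (vol_density g y * grad g b y $ i) - b y * (vol_density g y * grad g a y $ i))
        / (a y)\<^sup>2) differentiable (at x)"
      using assms(3,4)[OF assms(2)] assms(5)[OF assms(2)]
      by (intro differentiable_divide differentiable_diff differentiable_power
          differentiable_mult[OF _ assms(6)] differentiable_mult[OF _ assms(7)]) auto
    fix y assume y: "y \<in> U"
    have "grad g ?u y $ i = (a y * grad g b y $ i - b y * grad g a y $ i) / (a y)\<^sup>2"
      using arg_cong[OF wronskian[OF y], of "\<lambda>v. v $ i"] assms(5)[OF y]
      unfolding wronskian_grad_def by (simp add: field_simps)
    then show "(a y * (vol_density g y * grad g b y $ i) - b y * (vol_density g y * grad g a y $ i))
        / (a y)\<^sup>2 = vol_density g y * grad g ?u y $ i"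
      by (simp add: field_simps)
  qed
  then have "vf_apply (grad g ?u) (\<lambda>y. (a y)\<^sup>2) x + (a x)\<^sup>2 * div_vol g (grad g ?u) x
      = div_vol g (\<lambda>y. (a y)\<^sup>2 *\<^sub>R grad g ?u y) x"
    using assms(2,3,8) by (simp add: div_vol_scaleR)
  also have "\<dots> = div_vol g (wronskian_grad g a b) x"
    using wronskian by (rule div_vol_cong_open[OF assms(1,2)])
  finally show ?thesis .
qed

theorem proposition3p4:
  fixes U :: "(real^'n::finite) set"
    and g :: "real^'n \<Rightarrow> real^'n^'n"
    and a b :: "real^'n \<Rightarrow> real"
    and lam :: real
  assumes "open U"
    and "riemannian_metric_on U g"
    and "smooth_on U a" and "smooth_on U b"
    and "\<forall>x\<in>U. a x > 0"
    and "\<forall>x\<in>U. laplacian g a x + lam * a x = 0"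
    and "\<forall>x\<in>U. laplacian g b x + lam * b x = 0"
  shows "last_multiplier U g (\<lambda>x. (a x)^2) (grad g (\<lambda>x. b x / a x))"
  unfolding last_multiplier_def
proof
  fix x assume x: "x \<in> U"
  have da: "a differentiable (at y)" and db: "b differentiable (at y)" if "y \<in> U" for y
    using smooth_on_differentiable(1)[OF _ assms(1) that] assms(3,4) by blast+
  have vol_density_grad: "(\<lambda>y. vol_density g y * grad g f y $ i) differentiable (at x)"
    if "smooth_on U f" for f i
    by (rule vol_density_grad_differentiable[OF assms(1,2) that x])
  have "vf_apply (grad g (\<lambda>x. b x / a x)) (\<lambda>x. (a x)\<^sup>2) x
      + (a x)\<^sup>2 * div_vol g (grad g (\<lambda>x. b x / a x)) x = div_vol g (wronskian_grad g a b) x"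
    using assms(5) by (intro vf_apply_add_div_vol_grad_quotient[OF assms(1) x da db]
        vol_density_grad assms(3,4) vol_density_nonzero[OF assms(2) x]) auto
  also have "\<dots> = a x * laplacian g b x - b x * laplacian g a x"
    by (intro div_vol_wronskian_grad da db x vol_density_grad assms(3,4)
        vol_density_nonzero[OF assms(2) x] riemannian_metric_on_symmetric_matrix_inv[OF assms(2) x])
  also have "\<dots> = 0"
  proof -
    have "laplacian g a x = - (lam * a x)" "laplacian g b x = - (lam * b x)"
      using assms(6,7) x by (auto simp: eq_neg_iff_add_eq_0)
    then show ?thesis by (simp add: algebra_simps)
  qed
  finally show "vf_apply (grad g (\<lambda>x. b x / a x)) (\<lambda>x. (a x)\<^sup>2) x
      + (a x)\<^sup>2 * div_vol g (grad g (\<lambda>x. b x / a x)) x = 0" .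
qed

end
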